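(* Let $a>1$ be an integer that is a zero divisor in $\mathbb{Z}/m\mathbb{Z}$, let $k\ge1$ with $a^k\mid m$, and let $(K_n,\alpha)$ be an edge-labeled complete graph over $\mathbb{Z}/m\mathbb{Z}$ with ordered edge labels $a^{i_1},\dots,a^{i_{r_n}}$ such that either $a^{i_{r_n}}\mid a^{i_{r_n-1}}\mid\cdots\mid a^{i_1}\mid a^k$ with $i_{r_n}\ge1$ and $i_1<k$, or $a^{i_1}\mid a^{i_2}\mid\cdots\mid a^{i_{r_n}}\mid a^k$ with $i_1\ge1$ and $i_{r_n}<k$. Then for every connected spanning subgraph $H$ of $K_n$, equipped with the restriction of $\alpha$ to its edges, $\operatorname{rk}[\mathbb{Z}/m\mathbb{Z}]_{(H,\alpha)}=n$.
   Context: A spline on an edge-labeled graph $(G,\alpha)$ over $\mathbb{Z}/m\mathbb{Z}$ (edges labeled by nonzero ideals) is a vector $(f_{v_1},\dots,f_{v_n})\in(\mathbb{Z}/m\mathbb{Z})^n$ with $f_{v_i}-f_{v_j}\in\alpha(v_iv_j)$ for every edge; the splines form a $\mathbb{Z}$-module $[\mathbb{Z}/m\mathbb{Z}]_{(G,\alpha)}$, whose rank $\operatorname{rk}$ is the smallest size of a generating set. $K_n$ is the complete graph on $v_1,\dots,v_n$; $r_k=k(k-1)/2$; for $1\le j<k\le n$ the edge $v_jv_k$ is $e_{r_{k-1}+j}$. "Ordered edge labels $l_1,\dots,l_{r_n}$" means $\alpha(e_s)$ is the ideal generated by $l_s+m\mathbb{Z}$. *)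

theory Defs
  imports "HOL-Number_Theory.Cong"
begin

definition r :: "nat \<Rightarrow> nat" where
  "r k = k * (k - 1) div 2"

(* Edges of K_n on vertices v_1..v_n are encoded as pairs (j,k) with 1 \<le> j < k \<le> n;
   the edge v_j v_k is e_{r_{k-1}+j}. *)
definition Kn_edges :: "nat \<Rightarrow> (nat \<times> nat) set" where
  "Kn_edges n = {(j, k). 1 \<le> j \<and> j < k \<and> k \<le> n}"

definition edge_index :: "nat \<Rightarrow> nat \<Rightarrow> nat" where
  "edge_index j k = r (k - 1) + j"

definition connected_spanning :: "nat \<Rightarrow> (nat \<times> nat) set \<Rightarrow> bool" where
  "connected_spanning n E \<longleftrightarrow> E \<subseteq> Kn_edges n \<and>
     (\<forall>u \<in> {1..n}. \<forall>v \<in> {1..n}.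
        (\<lambda>x y. (x, y) \<in> E \<or> (y, x) \<in> E)\<^sup>*\<^sup>* u v)"

(* Elements of Z/mZ are represented by their canonical representatives in {0..<m};
   a vector in (Z/mZ)^n is a function nat => int supported on {1..n} with such values.
   lab j k is the integer generator l of the label (l + mZ) of edge v_j v_k (j < k). *)
definition splines :: "int \<Rightarrow> nat \<Rightarrow> (nat \<times> nat) set \<Rightarrow> (nat \<Rightarrow> nat \<Rightarrow> int)
    \<Rightarrow> (nat \<Rightarrow> int) set" where
  "splines m n E lab = {f. (\<forall>v \<in> {1..n}. 0 \<le> f v \<and> f v < m) \<and>
     (\<forall>v. v \<notin> {1..n} \<longrightarrow> f v = 0) \<and>
     (\<forall>(j, k) \<in> E. \<exists>c::int. [f j - f k = c * lab j k] (mod m))}"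

definition generates :: "int \<Rightarrow> nat \<Rightarrow> (nat \<Rightarrow> int) set \<Rightarrow> (nat \<Rightarrow> int) set \<Rightarrow> bool" where
  "generates m n G S \<longleftrightarrow> (\<forall>f \<in> S. \<exists>c :: (nat \<Rightarrow> int) \<Rightarrow> int.
      \<forall>v \<in> {1..n}. f v = (\<Sum>g \<in> G. c g * g v) mod m)"

definition rk :: "int \<Rightarrow> nat \<Rightarrow> (nat \<Rightarrow> int) set \<Rightarrow> nat" where
  "rk m n S = (LEAST t. \<exists>G. G \<subseteq> S \<and> finite G \<and> card G = t \<and> generates m n G S)"

definition zero_divisor_mod :: "int \<Rightarrow> int \<Rightarrow> bool" where
  "zero_divisor_mod m a \<longleftrightarrow> \<not> [a = 0] (mod m) \<and>
     (\<exists>b. \<not> [b = 0] (mod m) \<and> [a * b = 0] (mod m))"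

end

theory Submission
  imports Defs "HOL-Library.FuncSet"
begin

text \<open>
  The splines form a submodule S of (Z/mZ)^n, so the rank is determined by two counting bounds.
  Upper bound: for each vertex v_j, the values at v_j of the splines vanishing on v_1, ..., v_{j-1}
  form an ideal of Z/mZ, which is principal; a spline realising its generator can be split off,
  which gives a generating set of n "flow-up" splines.
  Lower bound: every label a^{i_s} divides a^{k-1}, hence m/a, so S contains every vector with
  entries in (m/a)Z/mZ. These vectors are a-torsion, so |S[a]| \<ge> a^n. On the other hand
  |S[a]| = |S/aS| \<le> a^|G| for every generating set G, since reducing the coefficients mod a
  spans S modulo aS. Hence |G| \<ge> n.
\<close>

lemma card_image_mult_le:
  assumes "finite A" and "\<And>y. y \<in> f ` A \<Longrightarrow> k \<le> card {x \<in> A. f x = y}"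
  shows "k * card (f ` A) \<le> card A"
proof -
  have "k * card (f ` A) \<le> (\<Sum>y \<in> f ` A. card {x \<in> A. f x = y})"
    using sum_bounded_below[of "f ` A" k] assms(2) by (simp add: mult.commute)
  also have "\<dots> = card A"
    by (simp only: card_eq_sum) (rule sum.image_gen[OF assms(1), symmetric])
  finally show ?thesis .
qed

lemma sum_insert_coeffs:
  fixes G :: "('a \<Rightarrow> 'b::comm_ring_1) set"
  assumes "finite G"
  obtains c' where "\<And>v. (\<Sum>g \<in> insert g0 G. c' g * g v) = q * g0 v + (\<Sum>g \<in> G. c g * g v)"
proof
  fix v
  define c' where "c' = (\<lambda>g. (if g \<in> G then c g else 0) + (if g = g0 then q else 0))"
  have "(\<Sum>g \<in> insert g0 G. c' g * g v)
      = (\<Sum>g \<in> insert g0 G. if g \<in> G then c g * g v else 0)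
        + (\<Sum>g \<in> insert g0 G. if g = g0 then q * g0 v else 0)"
    unfolding sum.distrib[symmetric] by (rule sum.cong) (auto simp: c'_def distrib_right)
  also have "\<dots> = (\<Sum>g \<in> G. c g * g v) + q * g0 v"
    using assms by (simp add: sum.inter_restrict[symmetric] Int_absorb1 subset_insertI)
  finally show "(\<Sum>g \<in> insert g0 G. c' g * g v) = q * g0 v + (\<Sum>g \<in> G. c g * g v)"
    by simp
qed

lemma principal_mod_ideal:
  fixes A :: "int set"
  assumes "0 \<in> A" and "A \<subseteq> {0..<m}"
    and closed: "\<And>a b x y. a \<in> A \<Longrightarrow> b \<in> A \<Longrightarrow> (x * a + y * b) mod m \<in> A"
  shows "\<exists>d \<in> A. \<forall>a \<in> A. d dvd a"
proof (cases "A \<subseteq> {0}")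
  case True
  then show ?thesis using assms(1) by auto
next
  case False
  define P where "P = {a \<in> A. 0 < a}"
  have "finite P"
    using assms(2) by (intro finite_subset[of P "{0..<m}"]) (auto simp: P_def)
  moreover have "P \<noteq> {}"
    using False assms(2) by (force simp: P_def)
  define d where "d = Min P"
  have d: "d \<in> A" "0 < d" "d < m"
    using Min_in[OF \<open>finite P\<close> \<open>P \<noteq> {}\<close>] assms(2) by (auto simp: d_def P_def)
  have "d dvd a" if "a \<in> A" for a
  proof -
    have "1 * a + (- (a div d)) * d = a mod d"
      by (simp add: minus_div_mult_eq_mod[symmetric])
    moreover have "a mod d < m" using d pos_mod_bound[of d a] by linarith
    ultimately have "(1 * a + (- (a div d)) * d) mod m = a mod d"
      using d by simp
    then have "a mod d \<in> A" using closed[OF that \<open>d \<in> A\<close>] by metis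
    moreover have "a mod d < d" using d by simp
    ultimately have "\<not> 0 < a mod d"
      using Min_le[OF \<open>finite P\<close>] by (force simp: d_def P_def)
    moreover have "0 \<le> a mod d" using d by simp
    ultimately show ?thesis by (simp add: dvd_eq_mod_eq_0)
  qed
  then show ?thesis using d by blast
qed

definition residue_vectors :: "int \<Rightarrow> nat \<Rightarrow> (nat \<Rightarrow> int) set" where
  "residue_vectors m n =
     {f. (\<forall>v \<in> {1..n}. 0 \<le> f v \<and> f v < m) \<and> (\<forall>v. v \<notin> {1..n} \<longrightarrow> f v = 0)}"

lemma finite_residue_vectors: "finite (residue_vectors m n)"
proof (rule inj_on_finite)
  show "inj_on (\<lambda>f. restrict f {1..n}) (residue_vectors m n)"
  proof (rule inj_onI, rule ext)
    fix f g v
    assume "f \<in> residue_vectors m n" "g \<in> residue_vectors m n"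
      and "restrict f {1..n} = restrict g {1..n}"
    then show "f v = g v"
      by (cases "v \<in> {1..n}") (auto simp: residue_vectors_def dest: fun_cong[of _ _ v])
  qed
  show "(\<lambda>f. restrict f {1..n}) ` residue_vectors m n \<subseteq> PiE {1..n} (\<lambda>_. {0..<m})"
    by (auto simp: residue_vectors_def)
qed (auto intro: finite_PiE)

locale zmod_submodule =
  fixes m :: int and n :: nat and S :: "(nat \<Rightarrow> int) set"
  assumes modulus_pos: "0 < m"
    and subset_residue_vectors: "S \<subseteq> residue_vectors m n"
    and zero_mem: "(\<lambda>_. 0) \<in> S"
    and lincomb_mem: "f \<in> S \<Longrightarrow> g \<in> S \<Longrightarrow> (\<lambda>v. (x * f v + y * g v) mod m) \<in> S"
begin

lemma mem_bounds: "f \<in> S \<Longrightarrow> v \<in> {1..n} \<Longrightarrow> 0 \<le> f v \<and> f v < m"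
  using subset_residue_vectors by (auto simp: residue_vectors_def)

lemma mem_vanishes_outside: "f \<in> S \<Longrightarrow> v \<notin> {1..n} \<Longrightarrow> f v = 0"
  using subset_residue_vectors by (auto simp: residue_vectors_def)

lemma mod_modulus_eq: "f \<in> S \<Longrightarrow> f v mod m = f v"
  using mem_bounds[of f v] mem_vanishes_outside[of f v] by (cases "v \<in> {1..n}") auto

lemma finite_carrier: "finite S"
  using finite_residue_vectors subset_residue_vectors by (rule finite_subset[rotated])

lemma sum_mem:
  assumes "finite G" and "G \<subseteq> S"
  shows "(\<lambda>v. (\<Sum>g \<in> G. c g * g v) mod m) \<in> S"
  using assms
proof (induction G rule: finite_induct)
  case empty
  then show ?case using zero_mem by simp
next
  case (insert g G)
  then have "(\<lambda>v. (c g * g v + 1 * ((\<Sum>g \<in> G. c g * g v) mod m)) mod m) \<in> S"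
    by (intro lincomb_mem) auto
  then show ?case
    using insert by (simp add: mod_add_right_eq)
qed

subsection \<open>A generating set with n elements\<close>

definition vanishing_on :: "nat \<Rightarrow> (nat \<Rightarrow> int) set" where
  "vanishing_on j = {f \<in> S. \<forall>v \<in> {1..j}. f v = 0}"

lemma vanishing_on_lincomb_mem:
  "f \<in> vanishing_on j \<Longrightarrow> g \<in> vanishing_on j \<Longrightarrow> (\<lambda>v. (x * f v + y * g v) mod m) \<in> vanishing_on j"
  by (auto simp: vanishing_on_def lincomb_mem)

lemma exists_pivot:
  assumes "j < n"
  shows "\<exists>g0 \<in> vanishing_on j. \<forall>f \<in> vanishing_on j. g0 (Suc j) dvd f (Suc j)"
proof -
  let ?A = "(\<lambda>f. f (Suc j)) ` vanishing_on j"
  have "\<exists>d \<in> ?A. \<forall>a \<in> ?A. d dvd a"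
  proof (rule principal_mod_ideal)
    show "0 \<in> ?A"
      using zero_mem by (force simp: vanishing_on_def)
    show "?A \<subseteq> {0..<m}"
      using assms mem_bounds by (auto simp: vanishing_on_def)
    show "(x * a + y * b) mod m \<in> ?A" if "a \<in> ?A" "b \<in> ?A" for a b x y
      using that vanishing_on_lincomb_mem by fastforce
  qed
  then show ?thesis by blast
qed

lemma generates_vanishing_on_insert_pivot:
  assumes "j < n" and "finite G" and gen: "generates m n G (vanishing_on (Suc j))"
  shows "\<exists>g0 \<in> vanishing_on j. generates m n (insert g0 G) (vanishing_on j)"
proof -
  obtain g0 where g0: "g0 \<in> vanishing_on j"
    and pivot: "\<And>f. f \<in> vanishing_on j \<Longrightarrow> g0 (Suc j) dvd f (Suc j)"
    using exists_pivot[OF assms(1)] by blast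
  have "\<exists>c'. \<forall>v \<in> {1..n}. f v = (\<Sum>g \<in> insert g0 G. c' g * g v) mod m"
    if f: "f \<in> vanishing_on j" for f
  proof -
    define q where "q = f (Suc j) div g0 (Suc j)"
    define h where "h = (\<lambda>v. (1 * f v + (- q) * g0 v) mod m)"
    have "h \<in> vanishing_on j"
      unfolding h_def using f g0 by (rule vanishing_on_lincomb_mem)
    moreover have "h (Suc j) = 0"
      using pivot[OF f] by (simp add: h_def q_def dvd_div_mult_self)
    ultimately have "h \<in> vanishing_on (Suc j)"
      by (auto simp: vanishing_on_def le_Suc_eq)
    then obtain c where c: "\<And>v. v \<in> {1..n} \<Longrightarrow> h v = (\<Sum>g \<in> G. c g * g v) mod m"
      using gen by (auto simp: generates_def)
    obtain c' where c': "\<And>v. (\<Sum>g \<in> insert g0 G. c' g * g v) = q * g0 v + (\<Sum>g \<in> G. c g * g v)"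
      using sum_insert_coeffs[OF assms(2)] by blast
    have "f v = (\<Sum>g \<in> insert g0 G. c' g * g v) mod m" if "v \<in> {1..n}" for v
    proof -
      have "f v = (q * g0 v + h v) mod m"
        using f mod_modulus_eq by (simp add: h_def vanishing_on_def mod_add_right_eq)
      also have "\<dots> = (\<Sum>g \<in> insert g0 G. c' g * g v) mod m"
        using c[OF that] by (simp add: c' mod_add_right_eq)
      finally show ?thesis .
    qed
    then show ?thesis by blast
  qed
  then show ?thesis
    using g0 by (auto simp: generates_def)
qed

lemma vanishing_on_generated:
  assumes "j \<le> n"
  shows "\<exists>G \<subseteq> vanishing_on j. finite G \<and> card G \<le> n - j \<and> generates m n G (vanishing_on j)"
  using assms
proof (induction rule: inc_induct)
  case base
  show ?case
    by (intro exI[of _ "{}"]) (auto simp: generates_def vanishing_on_def)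
next
  case (step j)
  then obtain G where G: "G \<subseteq> vanishing_on (Suc j)" "finite G" "card G \<le> n - Suc j"
    and gen: "generates m n G (vanishing_on (Suc j))"
    by blast
  obtain g0 where "g0 \<in> vanishing_on j" and "generates m n (insert g0 G) (vanishing_on j)"
    using generates_vanishing_on_insert_pivot[OF \<open>j < n\<close> G(2) gen] by blast
  moreover have "vanishing_on (Suc j) \<subseteq> vanishing_on j"
    by (auto simp: vanishing_on_def)
  moreover have "card (insert g0 G) \<le> n - j"
    using G(3) \<open>j < n\<close> by (intro card_insert_le_m1) auto
  ultimately show ?case
    using G by (intro exI[of _ "insert g0 G"]) auto
qed

lemma exists_generating_set_card_le: "\<exists>G \<subseteq> S. finite G \<and> card G \<le> n \<and> generates m n G S"
  using vanishing_on_generated[of 0] by (simp add: vanishing_on_def)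

lemma rk_le: "rk m n S \<le> n"
proof -
  obtain G where "G \<subseteq> S" "finite G" "card G \<le> n" "generates m n G S"
    using exists_generating_set_card_le by blast
  then have "rk m n S \<le> card G"
    unfolding rk_def by (intro Least_le) blast
  with \<open>card G \<le> n\<close> show ?thesis by linarith
qed

subsection \<open>Counting the p-torsion\<close>

definition scale :: "int \<Rightarrow> (nat \<Rightarrow> int) \<Rightarrow> nat \<Rightarrow> int" where
  "scale p f = (\<lambda>v. (p * f v) mod m)"

definition torsion :: "int \<Rightarrow> (nat \<Rightarrow> int) set" where
  "torsion p = {f \<in> S. scale p f = (\<lambda>_. 0)}"

text \<open>Each fibre of multiplication by p contains a translate of the torsion.\<close>

lemma card_torsion_mult_card_scale_le: "card (torsion p) * card (scale p ` S) \<le> card S"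
proof (rule card_image_mult_le[OF finite_carrier])
  fix y assume "y \<in> scale p ` S"
  then obtain f0 where f0: "f0 \<in> S" "y = scale p f0" by blast
  define shift where "shift = (\<lambda>f v. (f v + f0 v) mod m)"
  have "shift ` torsion p \<subseteq> {f \<in> S. scale p f = y}"
  proof (intro subsetI, elim imageE)
    fix g f assume g: "g = shift f" and f: "f \<in> torsion p"
    have "(p * f v) mod m = 0" for v
      using f by (simp add: torsion_def scale_def fun_eq_iff)
    then have "(p * ((f v + f0 v) mod m)) mod m = (p * f0 v) mod m" for v
      by (metis add_0 distrib_left mod_add_left_eq mod_mult_right_eq)
    then have "scale p g = y"
      by (simp add: g shift_def f0(2) scale_def)
    moreover have "g \<in> S"
      using f f0 lincomb_mem[of f f0 1 1] by (simp add: g shift_def torsion_def)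
    ultimately show "g \<in> {f \<in> S. scale p f = y}" by blast
  qed
  moreover have "inj_on shift (torsion p)"
  proof (rule inj_onI, rule ext)
    fix f g v assume "f \<in> torsion p" "g \<in> torsion p" "shift f = shift g"
    then have "[f v + f0 v = g v + f0 v] (mod m)" and "f \<in> S" "g \<in> S"
      by (auto simp: shift_def cong_def torsion_def dest: fun_cong[of _ _ v])
    then show "f v = g v"
      by (metis cong_add_rcancel cong_def mod_modulus_eq)
  qed
  ultimately show "card (torsion p) \<le> card {f \<in> S. scale p f = y}"
    using finite_carrier by (intro card_inj_on_le) auto
qed

text \<open>Splitting each coefficient d as (d mod p) + p (d div p) writes every f \<in> S as
  \<Sum> (d_g mod p) g + p h with h \<in> S.\<close>

lemma card_le_generated:
  assumes "0 < p" and G: "finite G" "G \<subseteq> S" and gen: "generates m n G S"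
  shows "card S \<le> nat p ^ card G * card (scale p ` S)"
proof -
  define W where "W = PiE G (\<lambda>_. {0..<p})"
  define combine where "combine = (\<lambda>(c, y) v. ((\<Sum>g \<in> G. c g * g v) + y v) mod m)"
  have "S \<subseteq> combine ` (W \<times> scale p ` S)"
  proof
    fix f assume f: "f \<in> S"
    obtain d where d: "\<And>v. v \<in> {1..n} \<Longrightarrow> f v = (\<Sum>g \<in> G. d g * g v) mod m"
      using gen f by (auto simp: generates_def)
    define c where "c = restrict (\<lambda>g. d g mod p) G"
    define h where "h = (\<lambda>v. (\<Sum>g \<in> G. (d g div p) * g v) mod m)"
    have "c \<in> W" using \<open>0 < p\<close> by (simp add: c_def W_def)
    moreover have "h \<in> S" unfolding h_def using G by (rule sum_mem)
    moreover have "f = combine (c, scale p h)"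
    proof
      fix v
      have "(\<Sum>g \<in> G. c g * g v) + p * (\<Sum>g \<in> G. (d g div p) * g v)
          = (\<Sum>g \<in> G. c g * g v + p * (d g div p) * g v)"
        by (simp add: sum.distrib sum_distrib_left mult.assoc)
      also have "\<dots> = (\<Sum>g \<in> G. d g * g v)"
        by (rule sum.cong) (simp_all add: c_def distrib_right[symmetric])
      finally have "(\<Sum>g \<in> G. c g * g v) + p * (\<Sum>g \<in> G. (d g div p) * g v) = (\<Sum>g \<in> G. d g * g v)" .
      then have "combine (c, scale p h) v = (\<Sum>g \<in> G. d g * g v) mod m"
        by (simp add: combine_def scale_def h_def mod_add_right_eq mod_mult_right_eq)
      moreover have "(\<Sum>g \<in> G. d g * g v) = 0" if "v \<notin> {1..n}"
        using G(2) that by (intro sum.neutral) (auto simp: mem_vanishes_outside)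
      ultimately show "f v = combine (c, scale p h) v"
        using d[of v] f mem_vanishes_outside[of f v] by (cases "v \<in> {1..n}") auto
    qed
    ultimately show "f \<in> combine ` (W \<times> scale p ` S)" by blast
  qed
  moreover have "finite W"
    unfolding W_def using G(1) by (intro finite_PiE) auto
  ultimately have "card S \<le> card (W \<times> scale p ` S)"
    using finite_carrier by (intro surj_card_le) auto
  also have "\<dots> = nat p ^ card G * card (scale p ` S)"
    by (simp add: W_def card_cartesian_product card_PiE G(1))
  finally show ?thesis .
qed

lemma card_torsion_le:
  assumes "0 < p" and "finite G" "G \<subseteq> S" "generates m n G S"
  shows "card (torsion p) \<le> nat p ^ card G"
proof -
  have "0 < card (scale p ` S)"
    using finite_carrier zero_mem by (auto simp: card_gt_0_iff)
  moreover have "card (torsion p) * card (scale p ` S) \<le> nat p ^ card G * card (scale p ` S)"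
    using card_torsion_mult_card_scale_le card_le_generated[OF assms] by (rule le_trans)
  ultimately show ?thesis by simp
qed

lemma card_torsion_ge:
  assumes "0 < p" and "p dvd m"
    and multiples_mem: "\<And>f. f \<in> residue_vectors m n \<Longrightarrow> (\<forall>v. m div p dvd f v) \<Longrightarrow> f \<in> S"
  shows "nat p ^ n \<le> card (torsion p)"
proof -
  define q where "q = m div p"
  have m_eq: "m = p * q" using \<open>p dvd m\<close> by (simp add: q_def)
  have "0 < q" using modulus_pos \<open>0 < p\<close> m_eq by (simp add: zero_less_mult_iff)
  define X where "X = PiE {1..n} (\<lambda>_. {0..<p})"
  define embed where "embed = (\<lambda>g v. if v \<in> {1..n} then g v * q else 0)"
  have "embed ` X \<subseteq> torsion p"
  proof
    fix f assume "f \<in> embed ` X"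
    then obtain g where f: "f = embed g" and "g \<in> X" by blast
    then have g: "\<And>v. v \<in> {1..n} \<Longrightarrow> 0 \<le> g v \<and> g v < p"
      by (auto simp: X_def PiE_iff)
    have "g v * q < m" if "v \<in> {1..n}" for v
      using g[OF that] \<open>0 < q\<close> m_eq by simp
    then have "f \<in> residue_vectors m n"
      using g \<open>0 < q\<close> by (simp add: f embed_def residue_vectors_def)
    then have "f \<in> S"
      by (rule multiples_mem) (simp add: f embed_def q_def)
    moreover have "p * f v = (if v \<in> {1..n} then g v * m else 0)" for v
      by (simp add: f embed_def m_eq)
    then have "scale p f = (\<lambda>_. 0)"
      by (simp add: fun_eq_iff scale_def)
    ultimately show "f \<in> torsion p" by (simp add: torsion_def)
  qed
  moreover have "inj_on embed X"
  proof (rule inj_onI, rule ext)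
    fix g g' v assume X: "g \<in> X" "g' \<in> X" and eq: "embed g = embed g'"
    show "g v = g' v"
    proof (cases "v \<in> {1..n}")
      case True
      then have "g v * q = g' v * q"
        using fun_cong[OF eq, of v] by (simp add: embed_def)
      then show ?thesis using \<open>0 < q\<close> by simp
    next
      case False
      then show ?thesis using X by (simp add: X_def PiE_def extensional_def)
    qed
  qed
  ultimately have "card X \<le> card (torsion p)"
    using finite_carrier by (intro card_inj_on_le) (auto simp: torsion_def)
  then show ?thesis by (simp add: X_def card_PiE)
qed

lemma rk_eq:
  assumes "1 < p" and "p dvd m"
    and "\<And>f. f \<in> residue_vectors m n \<Longrightarrow> (\<forall>v. m div p dvd f v) \<Longrightarrow> f \<in> S"
  shows "rk m n S = n"
proof -
  let ?gen = "\<lambda>t. \<exists>G. G \<subseteq> S \<and> finite G \<and> card G = t \<and> generates m n G S"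
  have "\<exists>t. ?gen t"
    using exists_generating_set_card_le by blast
  then have "?gen (rk m n S)"
    unfolding rk_def by (rule LeastI_ex)
  then obtain G where G: "G \<subseteq> S" "finite G" "card G = rk m n S" "generates m n G S"
    by blast
  have "nat p ^ n \<le> card (torsion p)"
    using assms by (intro card_torsion_ge) auto
  also have "\<dots> \<le> nat p ^ card G"
    using \<open>1 < p\<close> G by (intro card_torsion_le) auto
  finally have "n \<le> card G"
    using \<open>1 < p\<close> power_le_imp_le_exp[of "nat p" n "card G"] by simp
  with rk_le G(3) show ?thesis by simp
qed

end

lemma zmod_submodule_splines:
  assumes "0 < m"
  shows "zmod_submodule m n (splines m n E lab)"
proof
  show "splines m n E lab \<subseteq> residue_vectors m n"
    by (auto simp: splines_def residue_vectors_def)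
  show "(\<lambda>_. 0) \<in> splines m n E lab"
    using assms by (auto simp: splines_def intro: exI[of _ 0])
  fix f g and x y :: int
  assume f: "f \<in> splines m n E lab" and g: "g \<in> splines m n E lab"
  have "\<exists>c. [(x * f j + y * g j) mod m - (x * f k + y * g k) mod m = c * lab j k] (mod m)"
    if "(j, k) \<in> E" for j k
  proof -
    obtain cf cg where cf: "[f j - f k = cf * lab j k] (mod m)" and cg: "[g j - g k = cg * lab j k] (mod m)"
      using f g \<open>(j, k) \<in> E\<close> by (fastforce simp: splines_def)
    have "[(x * f j + y * g j) mod m - (x * f k + y * g k) mod m = x * (f j - f k) + y * (g j - g k)] (mod m)"
      by (simp add: cong_def mod_diff_eq algebra_simps)
    also have "[x * (f j - f k) + y * (g j - g k) = (x * cf + y * cg) * lab j k] (mod m)"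
      using cong_add[OF cong_scalar_left[OF cf, of x] cong_scalar_left[OF cg, of y]]
      by (simp add: algebra_simps)
    finally show ?thesis by blast
  qed
  then show "(\<lambda>v. (x * f v + y * g v) mod m) \<in> splines m n E lab"
    using f g assms by (auto simp: splines_def)
qed (fact assms)

lemma splines_contain_multiples:
  assumes "\<And>j k. (j, k) \<in> E \<Longrightarrow> lab j k dvd q"
    and "f \<in> residue_vectors m n" and "\<forall>v. q dvd f v"
  shows "f \<in> splines m n E lab"
proof -
  have "\<exists>c. [f j - f k = c * lab j k] (mod m)" if "(j, k) \<in> E" for j k
  proof -
    have "lab j k dvd f j - f k"
      using assms(1)[OF that] assms(3) by (meson dvd_diff dvd_trans)
    then obtain c where "f j - f k = lab j k * c" ..
    then show ?thesis by (metis cong_refl mult.commute)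
  qed
  then show ?thesis
    using assms(2) by (auto simp: splines_def residue_vectors_def)
qed

lemma rk_splines_eq:
  assumes "0 < m" and "1 < p" and "p dvd m"
    and "\<And>j k. (j, k) \<in> E \<Longrightarrow> lab j k dvd m div p"
  shows "rk m n (splines m n E lab) = n"
  using zmod_submodule_splines[OF assms(1)] assms(2,3)
  by (rule zmod_submodule.rk_eq) (auto intro: splines_contain_multiples assms(4))

lemma r_Suc: "r (Suc k) = r k + k"
proof -
  have "Suc k * k = k * (k - 1) + 2 * k" by (cases k) simp_all
  then show ?thesis by (simp add: r_def)
qed

lemma r_mono: "k \<le> l \<Longrightarrow> r k \<le> r l"
  unfolding r_def by (intro div_le_mono mult_le_mono diff_le_mono)

lemma edge_index_bounds:
  assumes "(j, k) \<in> Kn_edges n"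
  shows "edge_index j k \<in> {1..r n}"
proof -
  obtain k' where k: "k = Suc k'" "1 \<le> j" "j \<le> k'" "Suc k' \<le> n"
    using assms by (cases k) (auto simp: Kn_edges_def)
  then have "edge_index j k \<le> r (Suc k')"
    by (simp add: edge_index_def r_Suc)
  also have "\<dots> \<le> r n" using k(4) by (rule r_mono)
  finally show ?thesis using k by (simp add: edge_index_def)
qed

lemma dvd_first_of_descending_chain:
  fixes b :: "nat \<Rightarrow> 'a::comm_monoid_mult"
  assumes "\<forall>s \<in> {1..<N}. b (s + 1) dvd b s" and "s \<in> {1..N}"
  shows "b s dvd b 1"
proof -
  have "1 \<le> s" using assms(2) by simp
  then show ?thesis
  proof (induction rule: dec_induct)
    case (step t)
    then have "b (Suc t) dvd b t" using assms by simp
    with step.IH show ?case by (rule dvd_trans[rotated])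
  qed simp
qed

lemma dvd_last_of_ascending_chain:
  fixes b :: "nat \<Rightarrow> 'a::comm_monoid_mult"
  assumes "\<forall>s \<in> {1..<N}. b s dvd b (s + 1)" and "s \<in> {1..N}"
  shows "b s dvd b N"
proof -
  have "s \<le> N" using assms(2) by simp
  then show ?thesis
  proof (induction rule: inc_induct)
    case (step t)
    then have "b t dvd b (Suc t)" using assms by simp
    then show ?case using step.IH by (rule dvd_trans)
  qed simp
qed

lemma power_chain_dvd_power_pred:
  fixes a :: "'a::comm_semiring_1" and i :: "nat \<Rightarrow> nat"
  assumes "((\<forall>s \<in> {1..<N}. a ^ i (s + 1) dvd a ^ i s) \<and> i 1 < k)
      \<or> ((\<forall>s \<in> {1..<N}. a ^ i s dvd a ^ i (s + 1)) \<and> i N < k)"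
    and "s \<in> {1..N}"
  shows "a ^ i s dvd a ^ (k - 1)"
  using assms(1)
proof (elim disjE conjE)
  assume desc: "\<forall>s \<in> {1..<N}. a ^ i (s + 1) dvd a ^ i s" and "i 1 < k"
  have "a ^ i s dvd a ^ i 1"
    using dvd_first_of_descending_chain[of N "\<lambda>s. a ^ i s", OF desc assms(2)] .
  also have "a ^ i 1 dvd a ^ (k - 1)"
    using \<open>i 1 < k\<close> by (intro le_imp_power_dvd) simp
  finally show ?thesis .
next
  assume asc: "\<forall>s \<in> {1..<N}. a ^ i s dvd a ^ i (s + 1)" and "i N < k"
  have "a ^ i s dvd a ^ i N"
    using dvd_last_of_ascending_chain[of N "\<lambda>s. a ^ i s", OF asc assms(2)] .
  also have "a ^ i N dvd a ^ (k - 1)"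
    using \<open>i N < k\<close> by (intro le_imp_power_dvd) simp
  finally show ?thesis .
qed

theorem mainTheorem6:
  fixes m a :: int and k n :: nat and i :: "nat \<Rightarrow> nat" and E :: "(nat \<times> nat) set"
  assumes "m > 0" and "a > 1" and "zero_divisor_mod m a"
    and "k \<ge> 1" and "a ^ k dvd m"
    and "n \<ge> 2"
    and "((\<forall>s \<in> {1..<r n}. a ^ i (s + 1) dvd a ^ i s) \<and> a ^ i 1 dvd a ^ k
           \<and> i (r n) \<ge> 1 \<and> i 1 < k)
       \<or> ((\<forall>s \<in> {1..<r n}. a ^ i s dvd a ^ i (s + 1)) \<and> a ^ i (r n) dvd a ^ k
           \<and> i 1 \<ge> 1 \<and> i (r n) < k)"
    and "connected_spanning n E"
  shows "rk m n (splines m n E (\<lambda>j l. a ^ i (edge_index j l))) = n"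
proof (rule rk_splines_eq[OF \<open>m > 0\<close> \<open>a > 1\<close>])
  obtain k' where k': "k = Suc k'" using \<open>k \<ge> 1\<close> by (cases k) auto
  obtain t where "m = a ^ k * t" using \<open>a ^ k dvd m\<close> ..
  then have m_eq: "m = a * (a ^ k' * t)" by (simp add: k')
  then show "a dvd m" by simp
  have "m div a = a ^ k' * t" using m_eq \<open>a > 1\<close> by simp
  then have top_dvd: "a ^ k' dvd m div a" by simp
  fix j l assume "(j, l) \<in> E"
  then have "edge_index j l \<in> {1..r n}"
    using \<open>connected_spanning n E\<close> by (intro edge_index_bounds) (auto simp: connected_spanning_def)
  then have "a ^ i (edge_index j l) dvd a ^ k'"
    using power_chain_dvd_power_pred[of "r n" a i k] assms(7) by (auto simp: k')
  then show "a ^ i (edge_index j l) dvd m div a"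
    using top_dvd by (rule dvd_trans)
qed

end
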